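(* Let $a_1\ge1$ be an integer, let $m_1, m_2 \ge 1$ be coprime integers, let $\bm{x}^{(1)}, \bm{x}^{(2)} \in \mathcal{L}(f)$, and put $\tau_i := \tau(\bm{x}^{(i)}; m_i)$ for $i \in \{1,2\}$. If $\rho(\bm{x}^{(2)}; m_2) = \tau_2$, then there exists $\bm{x} \in \mathcal{L}(f)$ such that $x_j \equiv x^{(i)}_j \pmod{m_i}$ for all $j\ge0$ and each $i\in\{1,2\}$, and $$\rho(\bm{x}; m_1m_2) = \frac{\tau_2}{d}\sum_{r=0}^{d-1}\rho(\bm{x}^{(1)}; m_1, r, d),$$ where $d := \gcd(\tau_1,\tau_2)$.
   Context: Let $f := X^2 - a_1X - 1$. $\mathcal{L}(f)$ is the set of integer sequences $\bm{x}=(x_n)_{n\ge0}$ with $x_{n+2} = a_1x_{n+1} + x_n$ for all $n\ge0$. For an integer $m\ge1$, $\tau(\bm{x}; m)$ is the minimal integer $t \ge 1$ with $x_{n+t}\equiv x_n \pmod m$ for all sufficiently large $n$, and $\rho(\bm{x};m) := \#\{x_n \bmod m : n\ge0\}$. For integers $m, d \ge 1$ and $r$, $\rho(\bm{x}; m, r, d) := \#\{x_n \bmod m : n \ge 0,\ n \equiv r \pmod d\}$. *)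

theory Defs
  imports Complex_Main
begin

text \<open>The set L(f) of integer linear recurrence sequences for f = X^2 - a1 X - 1.\<close>
definition lrs :: "int \<Rightarrow> (nat \<Rightarrow> int) set" where
  "lrs a1 = {x. \<forall>n. x (n + 2) = a1 * x (n + 1) + x n}"

definition tau :: "(nat \<Rightarrow> int) \<Rightarrow> int \<Rightarrow> nat" where
  "tau x m = (LEAST t. t \<ge> 1 \<and> (\<exists>N. \<forall>n\<ge>N. x (n + t) mod m = x n mod m))"

definition rho :: "(nat \<Rightarrow> int) \<Rightarrow> int \<Rightarrow> nat" where
  "rho x m = card {x n mod m | n. True}"

definition rho_ap :: "(nat \<Rightarrow> int) \<Rightarrow> int \<Rightarrow> int \<Rightarrow> nat \<Rightarrow> nat" where
  "rho_ap x m r d = card {x n mod m | n. int n mod int d = r mod int d}"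

end

theory Submission
  imports Defs "HOL-Number_Theory.Number_Theory"
begin

text \<open>Let \<open>T = tau x2 m2\<close>, \<open>d = gcd (tau x1 m1) T\<close>, and let \<open>x\<close> be the Chinese remainder lift
  of \<open>x1\<close> and \<open>x2\<close>. Because \<open>rho x2 m2 = T\<close>, the residues \<open>x2 n mod m2\<close> are pairwise distinct
  over a period, so \<open>x n mod (m1 * m2)\<close> determines and is determined by the pair
  \<open>(n mod T, x1 n mod m1)\<close>. As \<open>x1 n mod m1\<close> has period \<open>tau x1 m1\<close>, the values it takes on
  a class \<open>s mod T\<close> are exactly those it takes on the class \<open>s mod d\<close> (a Chinese remainder
  argument for the indices); summing over the \<open>T\<close> classes counts each class modulo \<open>d\<close>
  exactly \<open>T div d\<close> times.\<close>

lemma sum_lessThan_mult_mod: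
  fixes g :: "nat \<Rightarrow> 'a::semiring_1"
  shows "(\<Sum>s<k * d. g (s mod d)) = of_nat k * (\<Sum>r<d. g r)"
proof -
  have block: "(\<Sum>s\<in>{i * d..<i * d + d}. g (s mod d)) = (\<Sum>r<d. g r)" for i
  proof -
    have "(\<Sum>s\<in>{i * d..<i * d + d}. g (s mod d)) = (\<Sum>r\<in>{0..<d}. g ((r + i * d) mod d))"
      using sum.shift_bounds_nat_ivl[of "\<lambda>s. g (s mod d)" 0 "i * d" d] by (simp add: add.commute)
    then show ?thesis by (simp add: atLeast0LessThan)
  qed
  show ?thesis
    using sum.nat_group[of "\<lambda>s. g (s mod d)" d k] by (simp add: block)
qed

text \<open>The witness is \<open>j = a * c\<close>, where \<open>p * a = q * b + gcd p q\<close> (Bezout) and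
  \<open>s + q * n - n = gcd p q * c\<close>.\<close>
lemma exists_add_mult_mod_eq:
  fixes p q n s :: nat
  assumes "p > 0" "q > 0" and "n mod gcd p q = s mod gcd p q"
  shows "\<exists>j. (n + p * j) mod q = s mod q"
proof -
  define g where "g = gcd p q"
  obtain a b where ab: "p * a = q * b + g" using bezout_nat[of p q] assms(1) by (auto simp: g_def)
  define s' where "s' = s + q * n"
  have "n \<le> q * n" using assms(2) by simp
  then have "n \<le> s'" unfolding s'_def by (rule trans_le_add2)
  obtain e where "q * n = g * e" by (metis dvd_def dvd_mult2 g_def gcd_dvd2)
  then have "s' mod g = s mod g" by (simp add: s'_def)
  with assms(3) have "s' mod g = n mod g" by (simp add: g_def)
  with \<open>n \<le> s'\<close> obtain c where c: "s' - n = g * c"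
    using mod_eq_dvd_iff_nat by blast
  have "p * (a * c) = (q * b + g) * c" by (simp add: ab mult.assoc[symmetric])
  also have "\<dots> = q * (b * c) + (s' - n)" using c by (simp add: algebra_simps)
  finally have "n + p * (a * c) = s + q * (n + b * c)"
    using \<open>n \<le> s'\<close> by (simp add: s'_def distrib_left)
  then show ?thesis by (metis mod_mult_self2)
qed

lemma periodic_add_mult:
  fixes f :: "nat \<Rightarrow> 'a"
  assumes "\<And>n. f (n + t) = f n"
  shows "f (n + t * k) = f n"
proof (induction k)
  case (Suc k)
  have "n + t * Suc k = (n + t * k) + t" by simp
  then show ?case using assms Suc by metis
qed simp

lemma periodic_mod:
  fixes f :: "nat \<Rightarrow> 'a"
  assumes "\<And>n. f (n + t) = f n"
  shows "f n = f (n mod t)"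
  using periodic_add_mult[of f t "n mod t" "n div t", OF assms] by (simp add: mod_mult_div_eq)

lemma periodic_range:
  fixes f :: "nat \<Rightarrow> 'a"
  assumes "\<And>n. f (n + t) = f n" and "t > 0"
  shows "range f = f ` {..<t}"
proof (intro equalityI subsetI)
  fix y assume "y \<in> range f"
  then obtain n where "y = f n" by blast
  then show "y \<in> f ` {..<t}"
    using periodic_mod[of f t, OF assms(1)] assms(2) by (metis imageI lessThan_iff mod_less_divisor)
qed auto

lemma periodic_eq_iff_mod_eq:
  fixes f :: "nat \<Rightarrow> 'a"
  assumes "\<And>n. f (n + t) = f n" and "t > 0" and "card (range f) = t"
  shows "f i = f j \<longleftrightarrow> i mod t = j mod t"
proof -
  have "inj_on f {..<t}"
    using assms periodic_range[of f t, OF assms(1,2)] by (intro eq_card_imp_inj_on) simp_all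
  then show ?thesis
    using periodic_mod[of f t, OF assms(1)] assms(2) by (metis inj_on_eq_iff lessThan_iff mod_less_divisor)
qed

lemma periodic_image_mod_eq_image_mod_gcd:
  fixes f :: "nat \<Rightarrow> 'a"
  assumes "\<And>n. f (n + p) = f n" and "p > 0" "q > 0"
  shows "{f n | n. n mod q = s mod q} = {f n | n. n mod gcd p q = s mod gcd p q}"
proof (intro equalityI subsetI)
  fix y assume "y \<in> {f n | n. n mod q = s mod q}"
  then obtain n where "y = f n" "n mod q = s mod q" by blast
  moreover have "n mod gcd p q = s mod gcd p q"
    using mod_mod_cancel[of "gcd p q" q] \<open>n mod q = s mod q\<close> by (metis gcd_dvd2)
  ultimately show "y \<in> {f n | n. n mod gcd p q = s mod gcd p q}" by blast
next
  fix y assume "y \<in> {f n | n. n mod gcd p q = s mod gcd p q}"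
  then obtain n where y: "y = f n" and "n mod gcd p q = s mod gcd p q" by blast
  then obtain j where "(n + p * j) mod q = s mod q"
    using exists_add_mult_mod_eq assms(2,3) by blast
  moreover have "f (n + p * j) = y" using periodic_add_mult[of f p, OF assms(1)] y by simp
  ultimately show "y \<in> {f n | n. n mod q = s mod q}" by blast
qed

lemma card_range_mod_pair_periodic:
  fixes f :: "nat \<Rightarrow> 'a"
  assumes per: "\<And>n. f (n + p) = f n" and "p > 0" "q > 0"
  shows "card (range (\<lambda>n. (n mod q, f n))) =
           q div gcd p q * (\<Sum>r<gcd p q. card {f n | n. n mod gcd p q = r})"
proof -
  define d where "d = gcd p q"
  define C where "C r = {f n | n. n mod d = r}" for r
  have "finite (range f)" using periodic_range[of f p, OF per \<open>p > 0\<close>] by simp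
  then have fin: "finite (C r)" for r by (rule rev_finite_subset) (auto simp: C_def)
  have "range (\<lambda>n. (n mod q, f n)) = (SIGMA s:{..<q}. C (s mod d))"
  proof (intro equalityI subsetI)
    fix z assume "z \<in> range (\<lambda>n. (n mod q, f n))"
    then obtain n where "z = (n mod q, f n)" by blast
    moreover have "n mod q mod d = n mod d" by (simp add: d_def mod_mod_cancel)
    ultimately show "z \<in> (SIGMA s:{..<q}. C (s mod d))"
      using \<open>q > 0\<close> by (auto simp: C_def)
  next
    fix z assume "z \<in> (SIGMA s:{..<q}. C (s mod d))"
    then obtain s n where "z = (s, f n)" "s < q" "n mod d = s mod d" by (auto simp: C_def)
    moreover have "f n \<in> {f k | k. k mod q = s mod q}"
      using periodic_image_mod_eq_image_mod_gcd[of f p q s, OF assms] \<open>n mod d = s mod d\<close>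
      by (auto simp: d_def)
    ultimately show "z \<in> range (\<lambda>n. (n mod q, f n))"
      by (auto simp: image_iff)
  qed
  then have "card (range (\<lambda>n. (n mod q, f n))) = (\<Sum>s<q. card (C (s mod d)))"
    using fin by simp
  also have "q = q div d * d" by (simp add: d_def)
  also have "(\<Sum>s<q div d * d. card (C (s mod d))) = q div d * (\<Sum>r<d. card (C r))"
    using sum_lessThan_mult_mod[where g = "\<lambda>r. card (C r)" and k = "q div d" and d = d] by simp
  finally show ?thesis by (simp add: C_def d_def)
qed


lemma lrs_rec: "x \<in> lrs a \<Longrightarrow> x (n + 2) = a * x (n + 1) + x n"
  by (simp add: lrs_def)

lemma lrs_shift: "x \<in> lrs a \<Longrightarrow> (\<lambda>n. x (n + t)) \<in> lrs a"
  by (simp add: lrs_def add.commute add.left_commute)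

lemma lrs_linear_combination:
  "x \<in> lrs a \<Longrightarrow> y \<in> lrs a \<Longrightarrow> (\<lambda>n. b * x n + c * y n) \<in> lrs a"
  by (simp add: lrs_def algebra_simps)

text \<open>Since the constant coefficient of f is a unit, the recurrence can be run backwards as
  well as forwards, so two consecutive terms determine a sequence modulo m in both directions.\<close>
lemma lrs_cong_from_two_terms:
  assumes x: "x \<in> lrs a" and y: "y \<in> lrs a"
    and "[x i = y i] (mod m)" and "[x (i + 1) = y (i + 1)] (mod m)"
  shows "[x n = y n] (mod m)"
proof -
  define Q where "Q n \<longleftrightarrow> [x n = y n] (mod m) \<and> [x (n + 1) = y (n + 1)] (mod m)" for n
  have forward: "Q (n + 1)" if "Q n" for n
  proof -
    have "[a * x (n + 1) + x n = a * y (n + 1) + y n] (mod m)"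
      using that by (intro cong_add cong_mult cong_refl) (simp_all add: Q_def)
    then show ?thesis using that lrs_rec[OF x, of n] lrs_rec[OF y, of n] by (simp add: Q_def)
  qed
  have backward: "Q n" if "Q (n + 1)" for n
  proof -
    have "[x (n + 2) - a * x (n + 1) = y (n + 2) - a * y (n + 1)] (mod m)"
      using that by (intro cong_diff cong_mult cong_refl) (simp_all add: Q_def)
    then show ?thesis using that lrs_rec[OF x, of n] lrs_rec[OF y, of n] by (simp add: Q_def)
  qed
  have "Q i" using assms(3,4) by (simp add: Q_def)
  have up: "Q (i + k)" for k
    by (induction k) (use \<open>Q i\<close> forward in auto)
  have down: "Q (i - k)" for k
  proof (induction k)
    case (Suc k)
    then show ?case
      by (cases "i - k = 0") (use backward[of "i - Suc k"] in \<open>auto simp: Suc_diff_Suc\<close>)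
  qed (use \<open>Q i\<close> in simp)
  show ?thesis
    using up[of "n - i"] down[of "i - n"] by (cases "i \<le> n") (simp_all add: Q_def)
qed

lemma lrs_periodic_mod_of_eventually:
  assumes x: "x \<in> lrs a" and "\<forall>n\<ge>N. x (n + t) mod m = x n mod m"
  shows "x (n + t) mod m = x n mod m"
proof -
  have "[x (N + t) = x N] (mod m)" "[x (N + 1 + t) = x (N + 1)] (mod m)"
    using assms(2)[rule_format, of N] assms(2)[rule_format, of "N + 1"]
    by (simp_all add: cong_def add.commute add.left_commute)
  then show ?thesis
    using lrs_cong_from_two_terms[OF lrs_shift[OF x] x] by (simp add: cong_def)
qed

lemma lrs_periodic_mod:
  assumes x: "x \<in> lrs a" and "m > 0"
  shows "\<exists>t\<ge>1. \<forall>n. x (n + t) mod m = x n mod m"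
proof -
  define pair where "pair n = (x n mod m, x (n + 1) mod m)" for n
  have "range pair \<subseteq> {0..<m} \<times> {0..<m}" using \<open>m > 0\<close> by (auto simp: pair_def)
  then have "\<not> inj pair"
    using finite_subset infinite_UNIV_nat finite_imageD by blast
  then obtain i j where "i < j" "pair i = pair j"
    by (metis linorder_neqE_nat injI)
  then have "[x (i + (j - i)) = x i] (mod m)" "[x (i + 1 + (j - i)) = x (i + 1)] (mod m)"
    by (simp_all add: pair_def cong_def)
  then have "x (n + (j - i)) mod m = x n mod m" for n
    using lrs_cong_from_two_terms[OF lrs_shift[OF x] x] by (simp add: cong_def)
  then show ?thesis using \<open>i < j\<close> by (intro exI[of _ "j - i"]) auto
qed

lemma
  assumes "x \<in> lrs a" and "m > 0"
  shows tau_ge_1: "tau x m \<ge> 1" and lrs_tau_period: "x (n + tau x m) mod m = x n mod m"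
proof -
  let ?P = "\<lambda>t. t \<ge> 1 \<and> (\<exists>N. \<forall>n\<ge>N. x (n + t) mod m = x n mod m)"
  have "?P (tau x m)"
    unfolding tau_def by (rule LeastI_ex) (use lrs_periodic_mod[OF assms] in blast)
  then show "tau x m \<ge> 1" "x (n + tau x m) mod m = x n mod m"
    using lrs_periodic_mod_of_eventually[OF assms(1)] by blast+
qed

lemma card_range_eq_if_same_kernel:
  assumes "\<And>a b. F a = F b \<longleftrightarrow> G a = G b"
  shows "card (range F) = card (range G)"
proof -
  define h where "h y = G (SOME n. F n = y)" for y
  have hF: "h (F n) = G n" for n
    using someI[of "\<lambda>k. F k = F n" n] assms by (simp add: h_def)
  have "inj_on h (range F)" by (auto simp: inj_on_def hF assms)
  moreover have "h ` range F = range G" by (simp add: hF image_image)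
  ultimately show ?thesis using card_image by metis
qed

lemma coprime_cong_mult_iff:
  fixes a b m n :: int
  assumes "coprime m n"
  shows "[a = b] (mod m * n) \<longleftrightarrow> [a = b] (mod m) \<and> [a = b] (mod n)"
  using assms coprime_cong_mult cong_dvd_modulus by (metis dvd_triv_left dvd_triv_right)

lemma lrs_chinese_remainder:
  fixes m1 m2 :: int
  assumes "coprime m1 m2" and "x1 \<in> lrs a" and "x2 \<in> lrs a"
  obtains x where "x \<in> lrs a" "\<And>j. x j mod m1 = x1 j mod m1" "\<And>j. x j mod m2 = x2 j mod m2"
proof -
  obtain u where u: "[m2 * u = 1] (mod m1)"
    using cong_solve_coprime_int[of m2 m1] assms(1) by (auto simp: coprime_commute)
  obtain v where v: "[m1 * v = 1] (mod m2)"
    using cong_solve_coprime_int[of m1 m2] assms(1) by auto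
  define x where "x j = m2 * u * x1 j + m1 * v * x2 j" for j
  have c1: "[x j = 1 * x1 j + 0 * x2 j] (mod m1)" for j
    unfolding x_def by (intro cong_add cong_mult u cong_refl) (simp add: cong_def)
  have c2: "[x j = 0 * x1 j + 1 * x2 j] (mod m2)" for j
    unfolding x_def by (intro cong_add cong_mult v cong_refl) (simp add: cong_def)
  show ?thesis
  proof (rule that)
    show "x \<in> lrs a" unfolding x_def using assms(2,3) by (rule lrs_linear_combination)
  qed (use c1 c2 in \<open>simp_all add: cong_def\<close>)
qed

lemma rho_eq_tau_imp_mod_eq_iff:
  assumes "x \<in> lrs a" and "m > 0" and "rho x m = tau x m"
  shows "x i mod m = x j mod m \<longleftrightarrow> i mod tau x m = j mod tau x m"
proof (rule periodic_eq_iff_mod_eq)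
  show "x (n + tau x m) mod m = x n mod m" for n using lrs_tau_period[OF assms(1,2)] .
  show "tau x m > 0" using tau_ge_1[OF assms(1,2)] by simp
  have "{x n mod m | n. True} = range (\<lambda>n. x n mod m)" by blast
  then show "card (range (\<lambda>n. x n mod m)) = tau x m" using assms(3) by (simp add: rho_def)
qed

lemma rho_mult_eq_card_range_pairs:
  fixes m1 m2 :: int
  assumes "coprime m1 m2" and "x2 \<in> lrs a" and "m2 > 0" and "rho x2 m2 = tau x2 m2"
    and "\<And>j. x j mod m1 = x1 j mod m1" and "\<And>j. x j mod m2 = x2 j mod m2"
  shows "rho x (m1 * m2) = card (range (\<lambda>n. (n mod tau x2 m2, x1 n mod m1)))"
proof -
  have "x i mod (m1 * m2) = x j mod (m1 * m2) \<longleftrightarrow>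
      (i mod tau x2 m2, x1 i mod m1) = (j mod tau x2 m2, x1 j mod m1)" for i j
    using coprime_cong_mult_iff[OF assms(1)] rho_eq_tau_imp_mod_eq_iff[OF assms(2-4)]
    by (auto simp: cong_def assms(5,6))
  then have "card (range (\<lambda>n. x n mod (m1 * m2))) = card (range (\<lambda>n. (n mod tau x2 m2, x1 n mod m1)))"
    by (rule card_range_eq_if_same_kernel)
  moreover have "{x n mod (m1 * m2) | n. True} = range (\<lambda>n. x n mod (m1 * m2))" by blast
  ultimately show ?thesis by (simp add: rho_def)
qed

lemma rho_ap_eq_card:
  assumes "r < d"
  shows "rho_ap x m (int r) d = card {x n mod m | n. n mod d = r}"
  using assms unfolding rho_ap_def by (simp add: zmod_int[symmetric])

theorem mainTheorem15:
  fixes a1 m1 m2 :: int and x1 x2 :: "nat \<Rightarrow> int"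
  assumes "a1 \<ge> 1" and "m1 \<ge> 1" and "m2 \<ge> 1" and "coprime m1 m2"
    and "x1 \<in> lrs a1" and "x2 \<in> lrs a1"
    and "rho x2 m2 = tau x2 m2"
  shows "\<exists>x \<in> lrs a1.
           (\<forall>j. x j mod m1 = x1 j mod m1) \<and> (\<forall>j. x j mod m2 = x2 j mod m2) \<and>
           real (rho x (m1 * m2)) =
             real (tau x2 m2) / real (gcd (tau x1 m1) (tau x2 m2)) *
             (\<Sum>r = 0..<gcd (tau x1 m1) (tau x2 m2).
                real (rho_ap x1 m1 (int r) (gcd (tau x1 m1) (tau x2 m2))))"
proof -
  define d where "d = gcd (tau x1 m1) (tau x2 m2)"
  have m: "m1 > 0" "m2 > 0" using assms(2,3) by simp_all
  have tau: "tau x1 m1 > 0" "tau x2 m2 > 0"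
    using tau_ge_1[OF assms(5) m(1)] tau_ge_1[OF assms(6) m(2)] by simp_all
  obtain x where x: "x \<in> lrs a1" "\<And>j. x j mod m1 = x1 j mod m1" "\<And>j. x j mod m2 = x2 j mod m2"
    using lrs_chinese_remainder[OF assms(4-6)] by blast
  have "rho x (m1 * m2) = card (range (\<lambda>n. (n mod tau x2 m2, x1 n mod m1)))"
    using rho_mult_eq_card_range_pairs[OF assms(4) assms(6) m(2) assms(7) x(2,3)] .
  also have "\<dots> = tau x2 m2 div d * (\<Sum>r<d. rho_ap x1 m1 (int r) d)"
    using card_range_mod_pair_periodic[of "\<lambda>n. x1 n mod m1", OF lrs_tau_period[OF assms(5) m(1)] tau]
    by (simp add: d_def rho_ap_eq_card)
  finally have "real (rho x (m1 * m2)) = real (tau x2 m2 div d) * (\<Sum>r<d. real (rho_ap x1 m1 (int r) d))"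
    by simp
  moreover have "real (tau x2 m2 div d) = real (tau x2 m2) / real d"
    by (simp add: d_def real_of_nat_div)
  ultimately show ?thesis
    using x by (auto simp: d_def atLeast0LessThan)
qed

end
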